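(* Let $(S,T)$ be an ideally triangulated surface with $\chi(S)<0$, with edge set $E$ and triangle set $F$. Let $l^{(m)}\in\mathbb{R}^E$ ($m\ge 0$) be a sequence such that $\widetilde\Psi(l^{(m)})\to z$ as $m\to\infty$ for some $z\in P(T)$. Then for every corner of every triangle in $F$, the corresponding generalized angles $\theta^{(m)}$ in the metrics $l^{(m)}$ form a bounded sequence; in particular, if $\lim_{m\to\infty}\theta^{(m)}$ exists in $[0,\infty]$, it lies in $[0,\infty)$.
   Context: For $l\in\mathbb{R}^E$, realize each triangle of $T$ as a decorated ideal hyperbolic triangle (ideal triangle with a horodisk at each vertex) whose generalized edge lengths are given by $l$; here the generalized angle at a vertex is twice the length of the horocyclic arc inside the triangle, and the generalized length of an edge is the distance between the horodisks at its ends if they are disjoint and minus the distance between the points where the two horocycles meet the edge otherwise. (The lengths determine the angles via $\frac{e^{l_i}}{2}=\frac{2}{\theta_j\theta_k}$, with $\theta_i$ the angle opposite the edge of length $l_i$.) In a triangle with angles $\theta_i,\theta_j,\theta_k$, the radius invariant at the edge opposite $\theta_i$ is $\frac12(\theta_j+\theta_k-\theta_i)$. Define $\widetilde\Psi(l)(e)=r_f(e)+r_{f'}(e)$, where $f,f'$ are the two triangles adjacent to $e$ and $r_f(e),r_{f'}(e)$ are the radius invariants at $e$ in them. An edge cycle is a sequence $(e_1,t_1,\dots,e_k,t_k)$ of edges and triangles such that, with $e_{k+1}=e_1$, $e_i$ and $e_{i+1}$ are two distinct edges of $t_i$ for each $i$. $P(T)=\{z\in\mathbb{R}^E:\sum_{i=1}^k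 z(e_i)>0$ for every edge cycle $(e_1,t_1,\dots,e_k,t_k)\}$. *)

theory Defs
  imports "HOL-Analysis.Analysis"
begin

text \<open>Combinatorial model of an ideally triangulated (oriented) surface via sides
 (half-tri_edges). H is the finite set of sides of triangles; nxt cyclically permutes the
 three sides of each triangle; glue is the gluing involution pairing sides into tri_edges.\<close>

definition ideal_triangulation :: "'h set \<Rightarrow> ('h \<Rightarrow> 'h) \<Rightarrow> ('h \<Rightarrow> 'h) \<Rightarrow> bool" where
  "ideal_triangulation H nxt glue \<longleftrightarrow>
     finite H \<and> nxt ` H \<subseteq> H \<and> glue ` H \<subseteq> H \<and>
     (\<forall>h\<in>H. nxt h \<noteq> h \<and> nxt (nxt (nxt h)) = h \<and> glue h \<noteq> h \<and> glue (glue h) = h) \<and>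
     (\<forall>h\<in>H. \<forall>h'\<in>H. (h, h') \<in> ({(x, nxt x) | x. x \<in> H} \<union> {(x, glue x) | x. x \<in> H})\<^sup>*)"

definition side_edge :: "('h \<Rightarrow> 'h) \<Rightarrow> 'h \<Rightarrow> 'h set" where
  "side_edge glue h = {h, glue h}"

definition side_tri :: "('h \<Rightarrow> 'h) \<Rightarrow> 'h \<Rightarrow> 'h set" where
  "side_tri nxt h = {h, nxt h, nxt (nxt h)}"

definition tri_edges :: "'h set \<Rightarrow> ('h \<Rightarrow> 'h) \<Rightarrow> 'h set set" where
  "tri_edges H glue = side_edge glue ` H"

definition triangles :: "'h set \<Rightarrow> ('h \<Rightarrow> 'h) \<Rightarrow> 'h set set" where
  "triangles H nxt = side_tri nxt ` H"

text \<open>Euler characteristic of the punctured surface S (ideal vertices removed): |F| - |E|.\<close>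
definition euler_char :: "'h set \<Rightarrow> ('h \<Rightarrow> 'h) \<Rightarrow> ('h \<Rightarrow> 'h) \<Rightarrow> int" where
  "euler_char H nxt glue = int (card (triangles H nxt)) - int (card (tri_edges H glue))"

text \<open>Generalized angle at the corner opposite side h, for edge lengths l \<in> R^E.
 With l_i the length of side h and l_j, l_k those of the other two sides, the relations
 e^{l_i}/2 = 2/(theta_j theta_k) (and cyclic) have the unique positive solution
 theta_i = 2 exp((l_i - l_j - l_k)/2).\<close>
definition gangle :: "('h \<Rightarrow> 'h) \<Rightarrow> ('h \<Rightarrow> 'h) \<Rightarrow> ('h set \<Rightarrow> real) \<Rightarrow> 'h \<Rightarrow> real" where
  "gangle nxt glue l h =
     2 * exp ((l (side_edge glue h) - l (side_edge glue (nxt h)) - l (side_edge glue (nxt (nxt h)))) / 2)"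

lemma gangle_relation:
  "exp (l (side_edge glue h)) / 2 =
     2 / (gangle nxt glue l (nxt h) * gangle nxt glue l (nxt (nxt h)))"
  if "nxt (nxt (nxt h)) = h"
  using that unfolding gangle_def
  by (simp add: exp_add[symmetric] exp_diff[symmetric] field_simps exp_minus)

definition radius_inv :: "('h \<Rightarrow> 'h) \<Rightarrow> ('h \<Rightarrow> 'h) \<Rightarrow> ('h set \<Rightarrow> real) \<Rightarrow> 'h \<Rightarrow> real" where
  "radius_inv nxt glue l h =
     (gangle nxt glue l (nxt h) + gangle nxt glue l (nxt (nxt h)) - gangle nxt glue l h) / 2"

definition Psi :: "('h \<Rightarrow> 'h) \<Rightarrow> ('h \<Rightarrow> 'h) \<Rightarrow> ('h set \<Rightarrow> real) \<Rightarrow> 'h set \<Rightarrow> real" where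
  "Psi nxt glue l e = (\<Sum>h\<in>e. radius_inv nxt glue l h)"

definition edge_cycle :: "'h set \<Rightarrow> ('h \<Rightarrow> 'h) \<Rightarrow> ('h \<Rightarrow> 'h) \<Rightarrow> 'h set list \<Rightarrow> 'h set list \<Rightarrow> bool" where
  "edge_cycle H nxt glue es ts \<longleftrightarrow>
     length es = length ts \<and> length es \<ge> 1 \<and>
     set es \<subseteq> tri_edges H glue \<and> set ts \<subseteq> triangles H nxt \<and>
     (\<forall>i < length es.
        es ! i \<in> side_edge glue ` (ts ! i) \<and>
        es ! ((i + 1) mod length es) \<in> side_edge glue ` (ts ! i) \<and>
        es ! i \<noteq> es ! ((i + 1) mod length es))"

definition PT :: "'h set \<Rightarrow> ('h \<Rightarrow> 'h) \<Rightarrow> ('h \<Rightarrow> 'h) \<Rightarrow> ('h set \<Rightarrow> real) set" where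
  "PT H nxt glue = {z. \<forall>es ts. edge_cycle H nxt glue es ts \<longrightarrow> (\<Sum>i<length es. z (es ! i)) > 0}"

end

theory Submission
  imports Defs
begin

text \<open>
  Every generalized angle is positive, so each single angle is bounded by
  the total angle of the triangulation.  Summing the radius invariants
  r(h) = (theta(nxt h) + theta(nxt (nxt h)) - theta h) / 2 over all sides h, and using that
  nxt permutes the sides, the total radius invariant equals half the total angle.  Since
  the sides are partitioned into edges {h, glue h}, the total radius invariant is also
  the sum of Psi over all edges.  Hence the total angle equals 2 * sum_e Psi(l) e, which
  converges (to 2 * sum_e z e) and is therefore bounded; this bounds every angle
  uniformly in m, and a bounded real sequence cannot tend to infinity in the extended reals.
\<close>

text \<open>The orbits {a, g a} of an involution g on a finite set A partition A,
  so summing over orbits and then over their elements is summing over the domain.\<close>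
lemma sum_over_involution_orbits:
  assumes fin: "finite A" and maps: "g ` A \<subseteq> A" and invol: "\<And>a. a \<in> A \<Longrightarrow> g (g a) = a"
  shows "(\<Sum>C\<in>(\<lambda>a. {a, g a}) ` A. \<Sum>x\<in>C. f x) = (\<Sum>x\<in>A. f x)"
proof -
  let ?Orb = "(\<lambda>a. {a, g a}) ` A"
  have union: "\<Union> ?Orb = A" using maps by auto
  have disjoint: "C \<inter> D = {}" if orbits: "C \<in> ?Orb" "D \<in> ?Orb" and "C \<noteq> D" for C D
  proof -
    obtain a b where ab: "a \<in> A" "b \<in> A" "C = {a, g a}" "D = {b, g b}"
      using orbits by auto
    have "C = D" if "x \<in> C" "x \<in> D" for x
    proof -
      have "b = a \<or> b = g a"
        using that ab invol[OF ab(1)] invol[OF ab(2)] by (metis insert_iff singletonD)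
      then show "C = D"
        using ab invol[OF ab(1)] by auto
    qed
    then show ?thesis using \<open>C \<noteq> D\<close> by blast
  qed
  have "sum f (\<Union> ?Orb) = (\<Sum>C\<in>?Orb. sum f C)"
    using sum.Union_disjoint[of ?Orb f] fin disjoint by auto
  then show ?thesis using union by simp
qed

lemma order_three_bij_betw:
  assumes maps: "f ` A \<subseteq> A" and order3: "\<And>a. a \<in> A \<Longrightarrow> f (f (f a)) = a"
  shows "bij_betw f A A"
proof (rule bij_betw_imageI)
  show "inj_on f A"
  proof (rule inj_onI)
    fix a b assume "a \<in> A" "b \<in> A" "f a = f b"
    then show "a = b" using order3[of a] order3[of b] by metis
  qed
  have "a \<in> f ` A" if "a \<in> A" for a
    using maps that order3[OF that] by (metis image_subset_iff rev_image_eqI)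
  then show "f ` A = A" using maps by blast
qed

lemma sum_nxt:
  assumes T: "ideal_triangulation H nxt glue"
  shows "(\<Sum>h\<in>H. f (nxt h)) = (\<Sum>h\<in>H. f h)"
proof -
  have "nxt ` H \<subseteq> H" and "\<And>h. h \<in> H \<Longrightarrow> nxt (nxt (nxt h)) = h"
    using T unfolding ideal_triangulation_def by auto
  then have "bij_betw nxt H H" by (rule order_three_bij_betw)
  then show ?thesis by (rule sum.reindex_bij_betw)
qed

lemma sum_edges:
  assumes T: "ideal_triangulation H nxt glue"
  shows "(\<Sum>e\<in>tri_edges H glue. \<Sum>h\<in>e. f h) = (\<Sum>h\<in>H. f h)"
proof -
  have "finite H" and "glue ` H \<subseteq> H" and "\<And>h. h \<in> H \<Longrightarrow> glue (glue h) = h"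
    using T unfolding ideal_triangulation_def by auto
  then show ?thesis
    unfolding tri_edges_def side_edge_def by (rule sum_over_involution_orbits)
qed

lemma gangle_pos: "gangle nxt glue l h > 0"
  unfolding gangle_def by simp

lemma total_angle:
  assumes T: "ideal_triangulation H nxt glue"
  shows "(\<Sum>h\<in>H. gangle nxt glue l h) = 2 * (\<Sum>e\<in>tri_edges H glue. Psi nxt glue l e)"
proof -
  let ?g = "gangle nxt glue l"
  have "(\<Sum>e\<in>tri_edges H glue. Psi nxt glue l e) = (\<Sum>h\<in>H. radius_inv nxt glue l h)"
    unfolding Psi_def by (rule sum_edges[OF T])
  also have "\<dots> = ((\<Sum>h\<in>H. ?g (nxt h)) + (\<Sum>h\<in>H. ?g (nxt (nxt h))) - (\<Sum>h\<in>H. ?g h)) / 2"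
    unfolding radius_inv_def sum_divide_distrib[symmetric] by (simp add: sum.distrib sum_subtractf)
  also have "\<dots> = (\<Sum>h\<in>H. ?g h) / 2"
    using sum_nxt[OF T, of ?g] sum_nxt[OF T, of "\<lambda>h. ?g (nxt h)"] by simp
  finally show ?thesis by simp
qed

lemma bounded_summand_of_convergent_sum:
  fixes x :: "nat \<Rightarrow> 'i \<Rightarrow> real"
  assumes fin: "finite I" and i: "i \<in> I" and nonneg: "\<And>m j. j \<in> I \<Longrightarrow> x m j \<ge> 0"
    and conv: "(\<lambda>m. \<Sum>j\<in>I. x m j) \<longlonglongrightarrow> s"
  shows "\<exists>B. \<forall>m. \<bar>x m i\<bar> \<le> B"
proof -
  obtain B where B: "\<And>m. \<bar>\<Sum>j\<in>I. x m j\<bar> \<le> B"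
    using convergent_imp_bounded[OF conv] unfolding bounded_iff by auto
  have "\<bar>x m i\<bar> \<le> B" for m
  proof -
    have "x m i \<le> (\<Sum>j\<in>I. x m j)"
      using fin i nonneg by (intro member_le_sum) auto
    then show ?thesis using B[of m] nonneg[OF i, of m] by simp
  qed
  then show ?thesis by blast
qed

lemma bounded_not_tendsto_PInfty:
  assumes bound: "\<And>m. \<bar>x m\<bar> \<le> B" and lim: "(\<lambda>m. ereal (x m)) \<longlonglongrightarrow> L"
  shows "L \<noteq> \<infinity>"
proof
  assume "L = \<infinity>"
  with lim have "\<forall>\<^sub>F m in sequentially. ereal (x m) > ereal B"
    by (simp add: tendsto_PInfty)
  then obtain m where "x m > B"
    by (auto simp: eventually_sequentially)
  with bound[of m] show False by simp
qed

theorem lemma2p4: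
  fixes H :: "'h set" and nxt glue :: "'h \<Rightarrow> 'h"
    and l :: "nat \<Rightarrow> 'h set \<Rightarrow> real" and z :: "'h set \<Rightarrow> real"
  assumes "ideal_triangulation H nxt glue"
    and "euler_char H nxt glue < 0"
    and "z \<in> PT H nxt glue"
    and "\<forall>e\<in>tri_edges H glue. (\<lambda>m. Psi nxt glue (l m) e) \<longlonglongrightarrow> z e"
  shows "\<forall>h\<in>H. (\<exists>B. \<forall>m. \<bar>gangle nxt glue (l m) h\<bar> \<le> B) \<and>
           (\<forall>L::ereal. (\<lambda>m. ereal (gangle nxt glue (l m) h)) \<longlonglongrightarrow> L \<longrightarrow> L \<noteq> \<infinity>)"
proof
  fix h assume h: "h \<in> H"
  have fin: "finite H" using assms(1) unfolding ideal_triangulation_def by auto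
  have "(\<lambda>m. 2 * (\<Sum>e\<in>tri_edges H glue. Psi nxt glue (l m) e))
          \<longlonglongrightarrow> 2 * (\<Sum>e\<in>tri_edges H glue. z e)"
    using assms(4) by (intro tendsto_mult tendsto_const tendsto_sum) auto
  then have "(\<lambda>m. \<Sum>k\<in>H. gangle nxt glue (l m) k) \<longlonglongrightarrow> 2 * (\<Sum>e\<in>tri_edges H glue. z e)"
    by (simp only: total_angle[OF assms(1)])
  then obtain B where bound: "\<And>m. \<bar>gangle nxt glue (l m) h\<bar> \<le> B"
    using bounded_summand_of_convergent_sum[OF fin h, of "\<lambda>m k. gangle nxt glue (l m) k"]
    by (auto intro: less_imp_le gangle_pos)
  then show "(\<exists>B. \<forall>m. \<bar>gangle nxt glue (l m) h\<bar> \<le> B) \<and>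
           (\<forall>L::ereal. (\<lambda>m. ereal (gangle nxt glue (l m) h)) \<longlonglongrightarrow> L \<longrightarrow> L \<noteq> \<infinity>)"
    using bounded_not_tendsto_PInfty[of "\<lambda>m. gangle nxt glue (l m) h" B] by auto
qed

end
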